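(* Let $\mathcal L$ be a recurrent language. Then $\mathcal L$ is eventually dendric if and only if $\mathcal L$ satisfies RBC.
   Context: $\mathcal{A}$ finite alphabet, $\mathcal{A}^*$ nonempty finite words. A language is a set $\mathcal L\subseteq\mathcal A^*$ with $\mathcal A\subseteq\mathcal L$, closed under subwords, and such that each $w\in\mathcal L$ has $a,b\in\mathcal A$ with $awb\in\mathcal L$. $\mathcal L$ is recurrent if for all $u,v\in\mathcal L$ there is $w\in\mathcal L$ with $uwv\in\mathcal L$. $Ex^\ell(w)=\{a: aw\in\mathcal L\}$, $Ex^r(w)=\{b: wb\in\mathcal L\}$, $Ex^{\ell r}(w)=\{(a,b): awb\in\mathcal L\}$. The extension graph $\mathscr E(w)$ is the bipartite graph whose vertex set is the disjoint union of $Ex^\ell(w)$ and $Ex^r(w)$, with an edge between $a$ and $b$ iff $(a,b)\in Ex^{\ell r}(w)$. $\mathcal L$ is eventually dendric if there is $n_0$ such that $\mathscr E(w)$ is a tree for all $w\in\mathcal L$ with $|w|\ge n_0$. Left special: $|Ex^\ell(w)|\ge2$; right special: $|Ex^r(w)|\ge2$; bispecial: both. A bispecial $w$ is regular bispecial if there is exactly one $\hat a\in Ex^\ell(w)$ with $\hat aw$ right special and exactly one $\hat b\in Ex^r(w)$ with $w\hat b$ left special. RBC: there is $n_0$ such that every bispecial word of length $\ge n_0$ is regular bispecial. *)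

theory Defs
  imports Main
begin

definition factor :: "'a list \<Rightarrow> 'a list \<Rightarrow> bool" where
  "factor u w \<longleftrightarrow> (\<exists>p s. w = p @ u @ s)"

definition is_language :: "'a set \<Rightarrow> 'a list set \<Rightarrow> bool" where
  "is_language A L \<longleftrightarrow>
     finite A \<and>
     (\<forall>w\<in>L. w \<noteq> [] \<and> set w \<subseteq> A) \<and>
     (\<forall>a\<in>A. [a] \<in> L) \<and>
     (\<forall>w\<in>L. \<forall>u. u \<noteq> [] \<and> factor u w \<longrightarrow> u \<in> L) \<and>
     (\<forall>w\<in>L. \<exists>a\<in>A. \<exists>b\<in>A. [a] @ w @ [b] \<in> L)"

definition recurrent :: "'a list set \<Rightarrow> bool" where
  "recurrent L \<longleftrightarrow> (\<forall>u\<in>L. \<forall>v\<in>L. \<exists>w\<in>L. u @ w @ v \<in> L)"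

definition Ex_l :: "'a set \<Rightarrow> 'a list set \<Rightarrow> 'a list \<Rightarrow> 'a set" where
  "Ex_l A L w = {a\<in>A. [a] @ w \<in> L}"

definition Ex_r :: "'a set \<Rightarrow> 'a list set \<Rightarrow> 'a list \<Rightarrow> 'a set" where
  "Ex_r A L w = {b\<in>A. w @ [b] \<in> L}"

definition Ex_lr :: "'a set \<Rightarrow> 'a list set \<Rightarrow> 'a list \<Rightarrow> ('a \<times> 'a) set" where
  "Ex_lr A L w = {(a,b). a\<in>A \<and> b\<in>A \<and> [a] @ w @ [b] \<in> L}"

definition graph_connected :: "'v set \<Rightarrow> ('v \<Rightarrow> 'v \<Rightarrow> bool) \<Rightarrow> bool" where
  "graph_connected V E \<longleftrightarrow>
     (\<forall>x\<in>V. \<forall>y\<in>V. (\<lambda>u v. u \<in> V \<and> v \<in> V \<and> (E u v \<or> E v u))\<^sup>*\<^sup>* x y)"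

text \<open>A tree: a nonempty connected graph without cycles; acyclicity is expressed as:
  every edge is a bridge (removing it disconnects its endpoints).\<close>
definition graph_tree :: "'v set \<Rightarrow> ('v \<Rightarrow> 'v \<Rightarrow> bool) \<Rightarrow> bool" where
  "graph_tree V E \<longleftrightarrow>
     V \<noteq> {} \<and> graph_connected V E \<and>
     (\<forall>x\<in>V. \<forall>y\<in>V. E x y \<longrightarrow>
        \<not> (\<lambda>u v. u \<in> V \<and> v \<in> V \<and> ((E u v \<or> E v u) \<and> {u,v} \<noteq> {x,y}))\<^sup>*\<^sup>* x y)"

definition ext_vertices :: "'a set \<Rightarrow> 'a list set \<Rightarrow> 'a list \<Rightarrow> ('a + 'a) set" where
  "ext_vertices A L w = Inl ` Ex_l A L w \<union> Inr ` Ex_r A L w"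

fun ext_edge :: "'a set \<Rightarrow> 'a list set \<Rightarrow> 'a list \<Rightarrow> 'a + 'a \<Rightarrow> 'a + 'a \<Rightarrow> bool" where
  "ext_edge A L w (Inl a) (Inr b) = ((a,b) \<in> Ex_lr A L w)"
| "ext_edge A L w _ _ = False"

definition eventually_dendric :: "'a set \<Rightarrow> 'a list set \<Rightarrow> bool" where
  "eventually_dendric A L \<longleftrightarrow>
     (\<exists>n0. \<forall>w\<in>L. length w \<ge> n0 \<longrightarrow> graph_tree (ext_vertices A L w) (ext_edge A L w))"

definition left_special :: "'a set \<Rightarrow> 'a list set \<Rightarrow> 'a list \<Rightarrow> bool" where
  "left_special A L w \<longleftrightarrow> card (Ex_l A L w) \<ge> 2"

definition right_special :: "'a set \<Rightarrow> 'a list set \<Rightarrow> 'a list \<Rightarrow> bool" where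
  "right_special A L w \<longleftrightarrow> card (Ex_r A L w) \<ge> 2"

definition bispecial :: "'a set \<Rightarrow> 'a list set \<Rightarrow> 'a list \<Rightarrow> bool" where
  "bispecial A L w \<longleftrightarrow> left_special A L w \<and> right_special A L w"

definition regular_bispecial :: "'a set \<Rightarrow> 'a list set \<Rightarrow> 'a list \<Rightarrow> bool" where
  "regular_bispecial A L w \<longleftrightarrow> bispecial A L w \<and>
     (\<exists>!a. a \<in> Ex_l A L w \<and> right_special A L ([a] @ w)) \<and>
     (\<exists>!b. b \<in> Ex_r A L w \<and> left_special A L (w @ [b]))"

definition RBC :: "'a set \<Rightarrow> 'a list set \<Rightarrow> bool" where
  "RBC A L \<longleftrightarrow>
     (\<exists>n0. \<forall>w\<in>L. length w \<ge> n0 \<and> bispecial A L w \<longrightarrow> regular_bispecial A L w)"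

end

theory Submission
  imports Defs
begin

text \<open>Let \<open>l(w)\<close>, \<open>r(w)\<close>, \<open>e(w)\<close> count the left, right and two-sided extensions of \<open>w\<close>, and
  let \<open>m(w) = e(w) - l(w) - r(w) + 1\<close>. The extension graph of \<open>w\<close> has \<open>l(w) + r(w)\<close> vertices
  and \<open>e(w)\<close> edges, so \<open>m(w) \<le> 0\<close> if it is a tree. Conversely, if \<open>w\<close> has a left extension
  \<open>a'\<close> such that no other \<open>a w\<close> is right special, then \<open>m(w) \<le> 0\<close>; if moreover there is such a
  \<open>b'\<close> on the right and \<open>m(w) = 0\<close>, the extension graph is the double star with centres \<open>a'\<close>
  and \<open>b'\<close>, a tree. Non-bispecial and regular bispecial words have such \<open>a'\<close> and \<open>b'\<close>.

  The two conditions meet through counting: \<open>s(n) = p(n+1) - p(n) \<ge> 0\<close>, where \<open>p\<close> is the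
  complexity, satisfies \<open>s(n+1) - s(n) = \<Sum>\<^bsub>|w| = n\<^esub> m(w)\<close>. So if eventually \<open>m \<le> 0\<close>, then
  \<open>s\<close> is eventually constant and eventually \<open>m = 0\<close>. Then every long right special word has a
  right special left extension, while the number of right special words of length \<open>n\<close> is
  at most \<open>s(n)\<close>; this number is thus eventually constant, which forces the right special left
  extension to be unique. Reversing all words gives the same on the other side.\<close>

definition adj_avoiding :: "'v set \<Rightarrow> ('v \<Rightarrow> 'v \<Rightarrow> bool) \<Rightarrow> 'v set set \<Rightarrow> 'v \<Rightarrow> 'v \<Rightarrow> bool" where
  "adj_avoiding V E F u v \<longleftrightarrow> u \<in> V \<and> v \<in> V \<and> (E u v \<or> E v u) \<and> {u, v} \<notin> F"

lemma adj_avoiding_rtranclp_sym: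
  "(adj_avoiding V E F)\<^sup>*\<^sup>* x y \<Longrightarrow> (adj_avoiding V E F)\<^sup>*\<^sup>* y x"
  by (rule sympD[OF symp_rtranclp]) (auto intro!: sympI simp: adj_avoiding_def insert_commute)

lemma adj_avoiding_rtranclp_antimono:
  "F \<subseteq> F' \<Longrightarrow> (adj_avoiding V E F')\<^sup>*\<^sup>* x y \<Longrightarrow> (adj_avoiding V E F)\<^sup>*\<^sup>* x y"
  by (erule rtranclp_mono[THEN predicate2D, rotated]) (auto simp: adj_avoiding_def)

lemma graph_tree_iff_adj_avoiding:
  "graph_tree V E \<longleftrightarrow> V \<noteq> {} \<and> (\<forall>x\<in>V. \<forall>y\<in>V. (adj_avoiding V E {})\<^sup>*\<^sup>* x y) \<and>
     (\<forall>x\<in>V. \<forall>y\<in>V. E x y \<longrightarrow> \<not> (adj_avoiding V E {{x, y}})\<^sup>*\<^sup>* x y)"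
  unfolding graph_tree_def graph_connected_def adj_avoiding_def by simp

lemma rtranclp_closed_set:
  assumes "R\<^sup>*\<^sup>* x y" and "x \<in> S" and "\<And>u v. u \<in> S \<Longrightarrow> R u v \<Longrightarrow> v \<in> S"
  shows "y \<in> S"
  using assms(1) by induction (use assms(2,3) in blast)+

lemma adj_avoiding_reach_from_edge_end:
  assumes "(adj_avoiding V E {})\<^sup>*\<^sup>* x z"
  shows "(adj_avoiding V E {{x, y}})\<^sup>*\<^sup>* x z \<or> (adj_avoiding V E {{x, y}})\<^sup>*\<^sup>* y z"
  using assms
proof (induction rule: rtranclp_induct)
  case (step z z')
  show ?case
  proof (cases "{z, z'} = {x, y}")
    case True
    then show ?thesis by (auto simp: doubleton_eq_iff)
  next
    case False
    then have "adj_avoiding V E {{x, y}} z z'" using step.hyps(2) by (auto simp: adj_avoiding_def)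
    then show ?thesis using step.IH by (meson rtranclp.rtrancl_into_rtrancl)
  qed
qed simp

lemma adj_avoiding_rtranclp_insert:
  assumes "(adj_avoiding V E F)\<^sup>*\<^sup>* r z" and "\<not> (adj_avoiding V E F)\<^sup>*\<^sup>* r v" and "v \<in> e"
  shows "(adj_avoiding V E (insert e F))\<^sup>*\<^sup>* r z"
  using assms(1)
proof (induction rule: rtranclp_induct)
  case (step z z')
  have "{z, z'} \<noteq> e"
    using step assms(2,3) by (metis insertE rtranclp.rtrancl_into_rtrancl singletonD)
  then have "adj_avoiding V E (insert e F) z z'" using step.hyps(2) by (auto simp: adj_avoiding_def)
  then show ?case using step.IH by (meson rtranclp.rtrancl_into_rtrancl)
qed simp

lemma adj_avoiding_reaches_cut_off_end:
  assumes "u \<in> V" and "v \<in> V" and "E u v \<or> E v u" and "{u, v} \<noteq> e" and "v \<in> e"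
    and "(adj_avoiding V E {{u, v}})\<^sup>*\<^sup>* r u" and "\<not> (adj_avoiding V E {{u, v}})\<^sup>*\<^sup>* r v"
  shows "(adj_avoiding V E {e})\<^sup>*\<^sup>* r v"
proof -
  have "(adj_avoiding V E {e, {u, v}})\<^sup>*\<^sup>* r u"
    using assms(6,7,5) by (rule adj_avoiding_rtranclp_insert)
  then have "(adj_avoiding V E {e})\<^sup>*\<^sup>* r u"
    by (rule adj_avoiding_rtranclp_antimono[rotated]) auto
  moreover have "adj_avoiding V E {e} u v"
    using assms(1-4) by (simp add: adj_avoiding_def)
  ultimately show ?thesis by (rule rtranclp.rtrancl_into_rtrancl)
qed

lemma graph_tree_edge_separates:
  assumes "graph_tree V E" and "x \<in> V" and "y \<in> V" and "E x y" and "r \<in> V"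
  shows "(adj_avoiding V E {{x, y}})\<^sup>*\<^sup>* r x \<longleftrightarrow> \<not> (adj_avoiding V E {{x, y}})\<^sup>*\<^sup>* r y"
proof -
  have connected: "(adj_avoiding V E {})\<^sup>*\<^sup>* x r"
    and bridge: "\<not> (adj_avoiding V E {{x, y}})\<^sup>*\<^sup>* x y"
    using assms unfolding graph_tree_iff_adj_avoiding by blast+
  from connected have "(adj_avoiding V E {{x, y}})\<^sup>*\<^sup>* x r \<or> (adj_avoiding V E {{x, y}})\<^sup>*\<^sup>* y r"
    by (rule adj_avoiding_reach_from_edge_end)
  then show ?thesis
    using bridge by (metis adj_avoiding_rtranclp_sym rtranclp_trans)
qed

definition cut_off_end :: "'v set \<Rightarrow> ('v \<Rightarrow> 'v \<Rightarrow> bool) \<Rightarrow> 'v \<Rightarrow> 'v \<times> 'v \<Rightarrow> 'v" where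
  "cut_off_end V E r = (\<lambda>(x, y). if (adj_avoiding V E {{x, y}})\<^sup>*\<^sup>* r x then y else x)"

lemma cut_off_end:
  assumes "graph_tree V E" and "r \<in> V" and "x \<in> V" and "y \<in> V" and "E x y"
  obtains u where "{u, cut_off_end V E r (x, y)} = {x, y}"
    and "(adj_avoiding V E {{x, y}})\<^sup>*\<^sup>* r u"
    and "\<not> (adj_avoiding V E {{x, y}})\<^sup>*\<^sup>* r (cut_off_end V E r (x, y))"
  using graph_tree_edge_separates[OF assms(1,3-5,2)] that
  by (cases "(adj_avoiding V E {{x, y}})\<^sup>*\<^sup>* r x") (auto simp: cut_off_end_def insert_commute)

lemma inj_on_cut_off_end:
  assumes "graph_tree V E" and "r \<in> V" and asym: "\<And>x y. E x y \<Longrightarrow> \<not> E y x"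
  shows "inj_on (cut_off_end V E r) {(x, y). x \<in> V \<and> y \<in> V \<and> E x y}"
proof (rule inj_onI, clarify)
  fix x1 y1 x2 y2
  assume e1: "x1 \<in> V" "y1 \<in> V" "E x1 y1" and e2: "x2 \<in> V" "y2 \<in> V" "E x2 y2"
    and same: "cut_off_end V E r (x1, y1) = cut_off_end V E r (x2, y2)"
  define v where "v = cut_off_end V E r (x1, y1)"
  obtain u where u: "{u, v} = {x1, y1}" "(adj_avoiding V E {{x1, y1}})\<^sup>*\<^sup>* r u"
    "\<not> (adj_avoiding V E {{x1, y1}})\<^sup>*\<^sup>* r v"
    using cut_off_end[OF assms(1,2) e1] unfolding v_def .
  obtain u' where "{u', v} = {x2, y2}" and v_cut: "\<not> (adj_avoiding V E {{x2, y2}})\<^sup>*\<^sup>* r v"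
    using cut_off_end[OF assms(1,2) e2] unfolding v_def same .
  have "{x1, y1} = {x2, y2}"
  proof (rule ccontr)
    assume "{x1, y1} \<noteq> {x2, y2}"
    have "(adj_avoiding V E {{x2, y2}})\<^sup>*\<^sup>* r v"
    proof (rule adj_avoiding_reaches_cut_off_end)
      from e1 u(1) show "u \<in> V" "v \<in> V" "E u v \<or> E v u"
        by (auto simp: doubleton_eq_iff)
      show "{u, v} \<noteq> {x2, y2}" and "v \<in> {x2, y2}"
        using u(1) \<open>{x1, y1} \<noteq> {x2, y2}\<close> \<open>{u', v} = {x2, y2}\<close> by auto
      show "(adj_avoiding V E {{u, v}})\<^sup>*\<^sup>* r u" and "\<not> (adj_avoiding V E {{u, v}})\<^sup>*\<^sup>* r v"
        using u by simp_all
    qed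
    with v_cut show False by blast
  qed
  then show "x1 = x2 \<and> y1 = y2"
    using asym e1(3) e2(3) by (auto simp: doubleton_eq_iff)
qed

lemma graph_tree_card_edges:
  assumes "finite V" and "graph_tree V E" and asym: "\<And>x y. E x y \<Longrightarrow> \<not> E y x"
  shows "card {(x, y). x \<in> V \<and> y \<in> V \<and> E x y} < card V"
proof -
  let ?P = "{(x, y). x \<in> V \<and> y \<in> V \<and> E x y}"
  obtain r where r: "r \<in> V" using assms(2) by (auto simp: graph_tree_def)
  have "cut_off_end V E r ` ?P \<subseteq> V - {r}"
  proof clarify
    fix x y assume "x \<in> V" "y \<in> V" "E x y"
    then obtain u where "{u, cut_off_end V E r (x, y)} = {x, y}"
      and "\<not> (adj_avoiding V E {{x, y}})\<^sup>*\<^sup>* r (cut_off_end V E r (x, y))"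
      using cut_off_end[OF assms(2) r] by metis
    with \<open>x \<in> V\<close> \<open>y \<in> V\<close> show "cut_off_end V E r (x, y) \<in> V - {r}"
      by (auto simp: doubleton_eq_iff)
  qed
  have "card ?P = card (cut_off_end V E r ` ?P)"
    using inj_on_cut_off_end[OF assms(2) r asym] by (rule card_image[symmetric])
  also have "\<dots> \<le> card (V - {r})"
    using \<open>cut_off_end V E r ` ?P \<subseteq> V - {r}\<close> assms(1) by (intro card_mono) auto
  also have "\<dots> < card V"
    using assms(1) r by (rule card_Diff1_less)
  finally show ?thesis .
qed

lemma adj_avoiding_bipartite_iff:
  assumes "\<And>u v. E u v \<Longrightarrow> \<exists>a b. u = Inl a \<and> v = Inr b"
  shows "adj_avoiding (Inl ` X \<union> Inr ` Y) E F z z' \<longleftrightarrow> {z, z'} \<notin> F \<and>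
    (\<exists>a\<in>X. \<exists>b\<in>Y. E (Inl a) (Inr b) \<and> (z = Inl a \<and> z' = Inr b \<or> z = Inr b \<and> z' = Inl a))"
proof -
  have "\<not> E (Inr b) z" "\<not> E z (Inl a)" for a b z
    using assms by blast+
  then show ?thesis
    by (cases z; cases z') (auto simp: adj_avoiding_def)
qed

lemma graph_tree_double_star:
  assumes "a0 \<in> X" and "b0 \<in> Y"
    and bipartite: "\<And>u v. E u v \<Longrightarrow> \<exists>a b. u = Inl a \<and> v = Inr b"
    and edge: "\<And>a b. a \<in> X \<Longrightarrow> b \<in> Y \<Longrightarrow> E (Inl a) (Inr b) \<longleftrightarrow> a = a0 \<or> b = b0"
  shows "graph_tree (Inl ` X \<union> Inr ` Y) E"
proof -
  define V where "V = Inl ` X \<union> Inr ` Y"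
  define G where "G = adj_avoiding V E"
  have G_iff: "G F z z' \<longleftrightarrow> {z, z'} \<notin> F \<and> (\<exists>a\<in>X. \<exists>b\<in>Y. (a = a0 \<or> b = b0) \<and>
      (z = Inl a \<and> z' = Inr b \<or> z = Inr b \<and> z' = Inl a))" for F z z'
    unfolding G_def V_def by (subst adj_avoiding_bipartite_iff[OF bipartite]) (auto simp: edge)
  have to_hub: "(G {})\<^sup>*\<^sup>* v (Inl a0)" if "v \<in> V" for v
  proof -
    have Inr_hub: "G {} (Inr b) (Inl a0)" if "b \<in> Y" for b
      using that assms(1) by (auto simp: G_iff)
    have "G {} (Inl a) (Inr b0)" if "a \<in> X" for a
      using that assms(2) by (auto simp: G_iff)
    with Inr_hub[OF assms(2)] \<open>v \<in> V\<close> show ?thesis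
      unfolding V_def by (blast intro: Inr_hub converse_rtranclp_into_rtranclp r_into_rtranclp)
  qed
  have bridge: "\<not> (G {{u, v}})\<^sup>*\<^sup>* u v" if uv_edge: "u \<in> V" "v \<in> V" "E u v" for u v
  proof -
    obtain a b where uv: "u = Inl a" "v = Inr b"
      using bipartite[OF uv_edge(3)] by blast
    then have "a \<in> X" "b \<in> Y"
      using uv_edge(1,2) by (auto simp: V_def)
    then have "a = a0 \<or> b = b0"
      using edge uv_edge(3) uv by blast
    text \<open>After removing the edge, an end which is not a hub is isolated; if both ends are hubs,
      the component of \<open>Inl a0\<close> consists of it and the leaves \<open>Inr b\<close>, \<open>b \<noteq> b0\<close>.\<close>
    define S where "S = (if a \<noteq> a0 then {u} else if b \<noteq> b0 then - {v}
      else insert (Inl a0) (Inr ` (- {b0})))"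
    have "u \<in> S" "v \<notin> S"
      using uv \<open>a = a0 \<or> b = b0\<close> by (auto simp: S_def)
    moreover have "z' \<in> S" if "z \<in> S" "G {{u, v}} z z'" for z z'
      using that uv \<open>a = a0 \<or> b = b0\<close> unfolding G_iff S_def
      by (auto split: if_splits simp: doubleton_eq_iff)
    ultimately show ?thesis using rtranclp_closed_set[of "G {{u, v}}" u v S] by blast
  qed
  have "V \<noteq> {}" using assms(1) by (auto simp: V_def)
  moreover have "(G {})\<^sup>*\<^sup>* u v" if "u \<in> V" "v \<in> V" for u v
    using to_hub[OF that(1)] to_hub[OF that(2)] unfolding G_def
    by (meson adj_avoiding_rtranclp_sym rtranclp_trans)
  ultimately have "graph_tree V E"
    using bridge unfolding graph_tree_iff_adj_avoiding G_def by blast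
  then show ?thesis by (simp only: V_def)
qed

lemma nat_antimono_eventually_constant:
  fixes f :: "nat \<Rightarrow> nat"
  assumes "\<And>n. N \<le> n \<Longrightarrow> f (Suc n) \<le> f n"
  shows "\<exists>M\<ge>N. \<forall>n\<ge>M. f n = f M"
proof -
  obtain M where "N \<le> M" and least: "\<And>n. N \<le> n \<Longrightarrow> f M \<le> f n"
    using ex_has_least_nat[of "\<lambda>n. N \<le> n" N f] by blast
  have "f n \<le> f M" if "M \<le> n" for n
    using lift_Suc_antimono_le[of "\<lambda>k. f (M + k)" 0 "n - M"] assms \<open>N \<le> M\<close> that by simp
  then show ?thesis
    using \<open>N \<le> M\<close> least by (metis le_antisym order.trans)
qed

lemma nat_mono_bounded_eventually_constant:
  fixes f :: "nat \<Rightarrow> nat"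
  assumes "\<And>n. N \<le> n \<Longrightarrow> f n \<le> f (Suc n)" and "\<And>n. N \<le> n \<Longrightarrow> f n \<le> B"
  shows "\<exists>M\<ge>N. \<forall>n\<ge>M. f n = f M"
proof -
  have "B - f (Suc n) \<le> B - f n" if "N \<le> n" for n
    using assms(1)[OF that] by (rule diff_le_mono2)
  then obtain M where "N \<le> M" and "\<And>n. M \<le> n \<Longrightarrow> B - f n = B - f M"
    using nat_antimono_eventually_constant[of N "\<lambda>n. B - f n"] by blast
  then show ?thesis using assms(2) by (metis diff_diff_cancel order_trans)
qed

locale language =
  fixes A :: "'a set" and L :: "'a list set"
  assumes is_language: "is_language A L"
begin

lemma finite_alphabet: "finite A"
  using is_language unfolding is_language_def by blast

lemma words_over_alphabet: "w \<in> L \<Longrightarrow> w \<noteq> [] \<and> set w \<subseteq> A"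
  using is_language unfolding is_language_def by blast

lemma factor_closed: "p @ u @ s \<in> L \<Longrightarrow> u \<noteq> [] \<Longrightarrow> u \<in> L"
  using is_language unfolding is_language_def factor_def by (elim conjE) blast

lemma extendable: "w \<in> L \<Longrightarrow> \<exists>a\<in>A. \<exists>b\<in>A. a # w @ [b] \<in> L"
  using is_language unfolding is_language_def append_Cons append_Nil by blast

lemma prefix_closed: "a # w @ [b] \<in> L \<Longrightarrow> a # w \<in> L"
  using factor_closed[of "[]" "a # w" "[b]"] by simp

lemma suffix_closed: "a # w @ [b] \<in> L \<Longrightarrow> w @ [b] \<in> L"
  using factor_closed[of "[a]" "w @ [b]" "[]"] by simp

lemma finite_Ex_l: "finite (Ex_l A L w)"
  using finite_alphabet by (simp add: Ex_l_def)

lemma finite_Ex_r: "finite (Ex_r A L w)"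
  using finite_alphabet by (simp add: Ex_r_def)

lemma Ex_l_nonempty: "w \<in> L \<Longrightarrow> Ex_l A L w \<noteq> {}"
  using extendable by (fastforce simp: Ex_l_def dest: prefix_closed)

lemma Ex_r_nonempty: "w \<in> L \<Longrightarrow> Ex_r A L w \<noteq> {}"
  using extendable by (fastforce simp: Ex_r_def dest: suffix_closed)

lemma Ex_r_Cons_subset: "Ex_r A L (a # w) \<subseteq> Ex_r A L w"
  by (auto simp: Ex_r_def dest: suffix_closed)

lemma Ex_l_snoc_subset: "Ex_l A L (w @ [b]) \<subseteq> Ex_l A L w"
  by (auto simp: Ex_l_def dest: prefix_closed)

lemma Ex_lr_subset: "Ex_lr A L w \<subseteq> Ex_l A L w \<times> Ex_r A L w"
  by (auto simp: Ex_lr_def Ex_l_def Ex_r_def dest: prefix_closed suffix_closed)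

lemma card_Ex_lr: "card (Ex_lr A L w) = (\<Sum>a\<in>Ex_l A L w. card (Ex_r A L (a # w)))"
proof -
  have "Ex_lr A L w = Sigma (Ex_l A L w) (\<lambda>a. Ex_r A L (a # w))"
    by (auto simp: Ex_lr_def Ex_l_def Ex_r_def dest: prefix_closed)
  then show ?thesis by (simp add: finite_Ex_l finite_Ex_r)
qed

definition words_of_length :: "nat \<Rightarrow> 'a list set" where
  "words_of_length n = {w \<in> L. length w = n}"

definition complexity :: "nat \<Rightarrow> nat" where
  "complexity n = card (words_of_length n)"

definition multiplicity :: "'a list \<Rightarrow> int" where
  "multiplicity w = int (card (Ex_lr A L w)) - int (card (Ex_l A L w)) - int (card (Ex_r A L w)) + 1"

definition for_long_words :: "('a list \<Rightarrow> bool) \<Rightarrow> bool" where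
  "for_long_words P \<longleftrightarrow> (\<exists>n0. \<forall>w\<in>L. n0 \<le> length w \<longrightarrow> P w)"

definition left_pivot :: "'a list \<Rightarrow> 'a \<Rightarrow> bool" where
  "left_pivot w a' \<longleftrightarrow> a' \<in> Ex_l A L w \<and> (\<forall>a\<in>Ex_l A L w. right_special A L (a # w) \<longrightarrow> a = a')"

definition right_pivot :: "'a list \<Rightarrow> 'a \<Rightarrow> bool" where
  "right_pivot w b' \<longleftrightarrow> b' \<in> Ex_r A L w \<and> (\<forall>b\<in>Ex_r A L w. left_special A L (w @ [b]) \<longrightarrow> b = b')"

lemma rev_image_iff: "u \<in> rev ` L \<longleftrightarrow> rev u \<in> L"
  by (metis image_iff rev_rev_ident)

lemma language_rev: "language A (rev ` L)"
proof
  have words: "\<forall>w\<in>rev ` L. w \<noteq> [] \<and> set w \<subseteq> A"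
    using words_over_alphabet by auto
  have letters: "\<forall>a\<in>A. [a] \<in> rev ` L"
    using is_language unfolding is_language_def by (metis rev_singleton_conv rev_image_iff)
  have factors: "\<forall>w\<in>rev ` L. \<forall>u. u \<noteq> [] \<and> factor u w \<longrightarrow> u \<in> rev ` L"
  proof (intro ballI allI impI)
    fix w u assume "w \<in> rev ` L" and "u \<noteq> [] \<and> factor u w"
    then obtain p s where "rev (p @ u @ s) \<in> L" and "u \<noteq> []"
      by (auto simp: factor_def rev_image_iff)
    then have "rev u \<in> L" using factor_closed[of "rev s" "rev u" "rev p"] by simp
    then show "u \<in> rev ` L" by (simp add: rev_image_iff)
  qed
  have extensions: "\<forall>w\<in>rev ` L. \<exists>a\<in>A. \<exists>b\<in>A. [a] @ w @ [b] \<in> rev ` L"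
  proof
    fix w assume "w \<in> rev ` L"
    then obtain a b where "a \<in> A" "b \<in> A" "a # rev w @ [b] \<in> L"
      using extendable[of "rev w"] by (auto simp: rev_image_iff)
    then show "\<exists>a\<in>A. \<exists>b\<in>A. [a] @ w @ [b] \<in> rev ` L"
      by (auto simp: rev_image_iff)
  qed
  show "is_language A (rev ` L)"
    unfolding is_language_def using finite_alphabet words letters factors extensions by blast
qed

lemma Ex_l_rev: "Ex_l A (rev ` L) u = Ex_r A L (rev u)"
  by (simp add: Ex_l_def Ex_r_def rev_image_iff)

lemma Ex_r_rev: "Ex_r A (rev ` L) u = Ex_l A L (rev u)"
  by (simp add: Ex_l_def Ex_r_def rev_image_iff)

lemma card_Ex_lr_rev: "card (Ex_lr A (rev ` L) u) = card (Ex_lr A L (rev u))"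
proof -
  have "Ex_lr A (rev ` L) u = prod.swap ` Ex_lr A L (rev u)"
    by (force simp: Ex_lr_def rev_image_iff)
  then show ?thesis by (simp add: card_image)
qed

lemma left_special_rev: "left_special A (rev ` L) u \<longleftrightarrow> right_special A L (rev u)"
  by (simp add: left_special_def right_special_def Ex_l_rev)

lemma right_special_rev: "right_special A (rev ` L) u \<longleftrightarrow> left_special A L (rev u)"
  by (simp add: left_special_def right_special_def Ex_r_rev)

text \<open>Reversing all words exchanges left and right; right-handed statements are obtained by
  applying their left-handed versions to the mirror language.\<close>

interpretation mirror: language A "rev ` L"
  by (rule language_rev)

lemma mirror_multiplicity: "mirror.multiplicity u = multiplicity (rev u)"
  by (simp add: mirror.multiplicity_def multiplicity_def Ex_l_rev Ex_r_rev card_Ex_lr_rev)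

lemma mirror_words_of_length: "mirror.words_of_length n = rev ` words_of_length n"
  by (force simp: mirror.words_of_length_def words_of_length_def rev_image_iff)

lemma mirror_for_long_words: "mirror.for_long_words P \<longleftrightarrow> for_long_words (\<lambda>w. P (rev w))"
  unfolding mirror.for_long_words_def for_long_words_def by (simp add: rev_image_iff)

lemma mirror_left_pivot: "mirror.left_pivot u a \<longleftrightarrow> right_pivot (rev u) a"
  by (simp add: mirror.left_pivot_def right_pivot_def Ex_l_rev right_special_rev)

lemma mirror_right_pivot: "mirror.right_pivot u b \<longleftrightarrow> left_pivot (rev u) b"
  by (simp add: mirror.right_pivot_def left_pivot_def Ex_r_rev left_special_rev)

lemma finite_words_of_length: "finite (words_of_length n)"
proof -
  have "words_of_length n \<subseteq> {xs. set xs \<subseteq> A \<and> length xs = n}"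
    using words_over_alphabet by (auto simp: words_of_length_def)
  then show ?thesis using finite_lists_length_eq[OF finite_alphabet] finite_subset by blast
qed

lemma sum_words_of_length_Suc:
  assumes "1 \<le> n"
  shows "(\<Sum>u\<in>words_of_length (Suc n). f u) = (\<Sum>w\<in>words_of_length n. \<Sum>a\<in>Ex_l A L w. f (a # w))"
proof -
  have "words_of_length (Suc n) = (\<lambda>(w, a). a # w) ` Sigma (words_of_length n) (Ex_l A L)"
  proof (intro equalityI subsetI)
    fix u assume "u \<in> words_of_length (Suc n)"
    then obtain a w where u: "u = a # w" "u \<in> L" "length w = n"
      by (cases u) (auto simp: words_of_length_def)
    then have "w \<in> L" using factor_closed[of "[a]" w "[]"] assms by (cases w) auto
    moreover have "a \<in> A" using words_over_alphabet[OF u(2)] u(1) by auto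
    ultimately show "u \<in> (\<lambda>(w, a). a # w) ` Sigma (words_of_length n) (Ex_l A L)"
      using u by (auto simp: words_of_length_def Ex_l_def)
  qed (auto simp: words_of_length_def Ex_l_def)
  moreover have "inj_on (\<lambda>(w, a). a # w) X" for X :: "('a list \<times> 'a) set"
    by (auto simp: inj_on_def)
  ultimately show ?thesis
    by (simp add: sum.reindex sum.Sigma finite_words_of_length finite_Ex_l split_def)
qed

lemma sum_words_of_length_Suc_right:
  assumes "1 \<le> n"
  shows "(\<Sum>u\<in>words_of_length (Suc n). f u) = (\<Sum>w\<in>words_of_length n. \<Sum>b\<in>Ex_r A L w. f (w @ [b]))"
proof -
  have "(\<Sum>u\<in>words_of_length (Suc n). f u) = (\<Sum>v\<in>mirror.words_of_length (Suc n). f (rev v))"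
    by (simp add: mirror_words_of_length sum.reindex)
  also have "\<dots> = (\<Sum>v\<in>mirror.words_of_length n. \<Sum>a\<in>Ex_l A (rev ` L) v. f (rev (a # v)))"
    by (rule language.sum_words_of_length_Suc[OF language_rev assms])
  also have "\<dots> = (\<Sum>w\<in>words_of_length n. \<Sum>b\<in>Ex_r A L w. f (w @ [b]))"
    by (simp add: mirror_words_of_length sum.reindex Ex_l_rev)
  finally show ?thesis .
qed

lemma complexity_Suc:
  "1 \<le> n \<Longrightarrow> complexity (Suc n) = (\<Sum>w\<in>words_of_length n. card (Ex_l A L w))"
  using sum_words_of_length_Suc[of n "\<lambda>_. 1 :: nat"] by (simp add: complexity_def)

lemma complexity_Suc_right:
  "1 \<le> n \<Longrightarrow> complexity (Suc n) = (\<Sum>w\<in>words_of_length n. card (Ex_r A L w))"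
  using sum_words_of_length_Suc_right[of n "\<lambda>_. 1 :: nat"] by (simp add: complexity_def)

lemma complexity_Suc_Suc:
  assumes "1 \<le> n"
  shows "complexity (Suc (Suc n)) = (\<Sum>w\<in>words_of_length n. card (Ex_lr A L w))"
proof -
  have "complexity (Suc (Suc n)) = (\<Sum>u\<in>words_of_length (Suc n). card (Ex_r A L u))"
    using assms by (simp add: complexity_Suc_right)
  also have "\<dots> = (\<Sum>w\<in>words_of_length n. card (Ex_lr A L w))"
    using assms by (simp add: sum_words_of_length_Suc card_Ex_lr)
  finally show ?thesis .
qed

definition complexity_diff :: "nat \<Rightarrow> int" where
  "complexity_diff n = int (complexity (Suc n)) - int (complexity n)"

lemma complexity_diff_eq:
  assumes "1 \<le> n"
  shows "complexity_diff n = (\<Sum>w\<in>words_of_length n. int (card (Ex_r A L w)) - 1)"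
  using complexity_Suc_right[OF assms]
  by (simp add: complexity_diff_def complexity_def sum_subtractf of_nat_sum)

lemma complexity_diff_nonneg: "1 \<le> n \<Longrightarrow> 0 \<le> complexity_diff n"
  unfolding complexity_diff_eq
  by (intro sum_nonneg) (auto simp: words_of_length_def Suc_le_eq card_gt_0_iff finite_Ex_r Ex_r_nonempty)

lemma complexity_diff_Suc:
  assumes "1 \<le> n"
  shows "complexity_diff (Suc n) = complexity_diff n + (\<Sum>w\<in>words_of_length n. multiplicity w)"
proof -
  let ?S = "\<lambda>f. \<Sum>w\<in>words_of_length n. int (card (f A L w))"
  have "(\<Sum>w\<in>words_of_length n. multiplicity w) = ?S Ex_lr - ?S Ex_l - ?S Ex_r + int (complexity n)"
    by (simp add: multiplicity_def complexity_def sum.distrib sum_subtractf)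
  moreover have "int (complexity (Suc (Suc n))) = ?S Ex_lr"
    using complexity_Suc_Suc[OF assms] by (simp add: of_nat_sum)
  moreover have "int (complexity (Suc n)) = ?S Ex_l"
    using complexity_Suc[OF assms] by (simp add: of_nat_sum)
  moreover have "int (complexity (Suc n)) = ?S Ex_r"
    using complexity_Suc_right[OF assms] by (simp add: of_nat_sum)
  ultimately show ?thesis unfolding complexity_diff_def by linarith
qed

lemma for_long_wordsE:
  assumes "for_long_words P"
  obtains n0 where "k \<le> n0" and "\<And>w. w \<in> L \<Longrightarrow> n0 \<le> length w \<Longrightarrow> P w"
  using assms unfolding for_long_words_def by (meson max.cobounded1 max.boundedE)

lemma for_long_words_mono:
  "for_long_words P \<Longrightarrow> (\<And>w. w \<in> L \<Longrightarrow> P w \<Longrightarrow> Q w) \<Longrightarrow> for_long_words Q"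
  unfolding for_long_words_def by blast

lemma for_long_words_conj:
  assumes "for_long_words P" and "for_long_words Q"
  shows "for_long_words (\<lambda>w. P w \<and> Q w)"
proof -
  obtain n1 n2 where "\<And>w. w \<in> L \<Longrightarrow> n1 \<le> length w \<Longrightarrow> P w"
    and "\<And>w. w \<in> L \<Longrightarrow> n2 \<le> length w \<Longrightarrow> Q w"
    using assms unfolding for_long_words_def by blast
  then show ?thesis unfolding for_long_words_def by (metis max.boundedE)
qed

lemma multiplicity_eventually_zero:
  assumes "for_long_words (\<lambda>w. multiplicity w \<le> 0)"
  shows "for_long_words (\<lambda>w. multiplicity w = 0)"
proof -
  obtain N where "1 \<le> N" and nonpos: "\<And>w. w \<in> L \<Longrightarrow> N \<le> length w \<Longrightarrow> multiplicity w \<le> 0"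
    using assms by (rule for_long_wordsE[where k = 1]) blast
  have sum_nonpos: "(\<Sum>w\<in>words_of_length n. multiplicity w) \<le> 0" if "N \<le> n" for n
    using nonpos that by (intro sum_nonpos) (auto simp: words_of_length_def)
  have "nat (complexity_diff (Suc n)) \<le> nat (complexity_diff n)" if "N \<le> n" for n
    using complexity_diff_Suc[of n] sum_nonpos[OF that] that \<open>1 \<le> N\<close> by simp
  then obtain M where "N \<le> M"
    and const: "\<And>n. M \<le> n \<Longrightarrow> nat (complexity_diff n) = nat (complexity_diff M)"
    using nat_antimono_eventually_constant[of N "\<lambda>n. nat (complexity_diff n)"] by blast
  have "multiplicity w = 0" if "w \<in> L" and "M \<le> length w" for w
  proof -
    let ?n = "length w"
    have "1 \<le> ?n" using that \<open>N \<le> M\<close> \<open>1 \<le> N\<close> by simp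
    then have "complexity_diff (Suc ?n) = complexity_diff ?n"
      using const[of ?n] const[of "Suc ?n"] complexity_diff_nonneg[of ?n]
        complexity_diff_nonneg[of "Suc ?n"] that(2) by simp
    then have sum_zero: "(\<Sum>u\<in>words_of_length ?n. multiplicity u) = (\<Sum>u\<in>words_of_length ?n. 0)"
      using complexity_diff_Suc[OF \<open>1 \<le> ?n\<close>] by simp
    have "multiplicity u \<le> 0" if "u \<in> words_of_length ?n" for u
      using nonpos that \<open>M \<le> length w\<close> \<open>N \<le> M\<close> by (auto simp: words_of_length_def)
    moreover have "w \<in> words_of_length ?n" using that by (simp add: words_of_length_def)
    ultimately show ?thesis
      using sum_mono_inv[OF sum_zero] finite_words_of_length by blast
  qed
  then show ?thesis unfolding for_long_words_def by blast
qed

lemma multiplicity_le_left_pivot: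
  assumes "left_pivot w a'"
  shows "multiplicity w \<le> int (card (Ex_r A L (a' # w))) - int (card (Ex_r A L w))"
proof -
  have a': "a' \<in> Ex_l A L w"
    and others: "\<And>a. a \<in> Ex_l A L w - {a'} \<Longrightarrow> card (Ex_r A L (a # w)) \<le> 1"
    using assms unfolding left_pivot_def right_special_def by force+
  have "card (Ex_lr A L w) = card (Ex_r A L (a' # w)) + (\<Sum>a\<in>Ex_l A L w - {a'}. card (Ex_r A L (a # w)))"
    unfolding card_Ex_lr using a' finite_Ex_l by (simp add: sum.remove)
  also have "\<dots> \<le> card (Ex_r A L (a' # w)) + (\<Sum>a\<in>Ex_l A L w - {a'}. 1)"
    using others by (intro add_left_mono sum_mono) auto
  also have "\<dots> = card (Ex_r A L (a' # w)) + card (Ex_l A L w - {a'})"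
    by simp
  finally show ?thesis
    using card.remove[OF finite_Ex_l a'] unfolding multiplicity_def by linarith
qed

lemma multiplicity_nonpos_if_left_pivot: "left_pivot w a' \<Longrightarrow> multiplicity w \<le> 0"
  using multiplicity_le_left_pivot card_mono[OF finite_Ex_r Ex_r_Cons_subset, of a' w] by fastforce

lemma Ex_r_left_pivot_eq:
  assumes "left_pivot w a'" and "multiplicity w = 0"
  shows "Ex_r A L (a' # w) = Ex_r A L w"
  using multiplicity_le_left_pivot[OF assms(1)] assms(2)
  by (intro card_subset_eq finite_Ex_r Ex_r_Cons_subset) (simp add: card_mono[OF finite_Ex_r Ex_r_Cons_subset] antisym)

lemma Ex_l_right_pivot_eq:
  assumes "right_pivot w b'" and "multiplicity w = 0"
  shows "Ex_l A L (w @ [b']) = Ex_l A L w"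
  using language.Ex_r_left_pivot_eq[OF language_rev, of "rev w" b'] assms
  by (simp add: mirror_left_pivot mirror_multiplicity Ex_r_rev)

lemma Ex_lr_if_pivots:
  assumes "left_pivot w a'" and "right_pivot w b'" and "multiplicity w = 0"
  shows "(a, b) \<in> Ex_lr A L w \<longleftrightarrow> a \<in> Ex_l A L w \<and> b \<in> Ex_r A L w \<and> (a = a' \<or> b = b')"
proof -
  have r: "Ex_r A L (a' # w) = Ex_r A L w" by (rule Ex_r_left_pivot_eq[OF assms(1,3)])
  have l: "Ex_l A L (w @ [b']) = Ex_l A L w" by (rule Ex_l_right_pivot_eq[OF assms(2,3)])
  have Ex_lr_iff: "(x, y) \<in> Ex_lr A L w \<longleftrightarrow> x \<in> A \<and> y \<in> Ex_r A L (x # w)"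
    "(x, y) \<in> Ex_lr A L w \<longleftrightarrow> y \<in> A \<and> x \<in> Ex_l A L (w @ [y])" for x y
    by (auto simp: Ex_lr_def Ex_l_def Ex_r_def)
  show ?thesis
  proof (intro iffI conjI)
    assume ab: "(a, b) \<in> Ex_lr A L w"
    then show a: "a \<in> Ex_l A L w" and "b \<in> Ex_r A L w" using Ex_lr_subset by blast+
    have "b = b'" if "a \<noteq> a'"
    proof -
      have "\<not> right_special A L (a # w)"
        using assms(1) a that unfolding left_pivot_def by blast
      moreover have "b' \<in> Ex_r A L (a # w)"
        using a assms(2) unfolding l[symmetric] right_pivot_def by (simp add: Ex_l_def Ex_r_def)
      moreover have "b \<in> Ex_r A L (a # w)"
        using ab Ex_lr_iff(1) by blast
      ultimately show "b = b'"
        using card_le_Suc0_iff_eq[OF finite_Ex_r, of "a # w"] by (auto simp: right_special_def)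
    qed
    then show "a = a' \<or> b = b'" by blast
  next
    assume "a \<in> Ex_l A L w \<and> b \<in> Ex_r A L w \<and> (a = a' \<or> b = b')"
    then consider "a = a'" "a \<in> A" "b \<in> Ex_r A L (a' # w)" | "b = b'" "b \<in> A" "a \<in> Ex_l A L (w @ [b'])"
      unfolding r l by (auto simp: Ex_l_def Ex_r_def)
    then show "(a, b) \<in> Ex_lr A L w"
      by cases (simp add: Ex_lr_iff(1), simp add: Ex_lr_iff(2))
  qed
qed

lemma ext_edge_iff:
  "ext_edge A L w u v \<longleftrightarrow> (\<exists>a b. u = Inl a \<and> v = Inr b \<and> (a, b) \<in> Ex_lr A L w)"
  by (cases u; cases v) auto

lemma graph_tree_if_pivots:
  assumes "left_pivot w a'" and "right_pivot w b'" and "multiplicity w = 0"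
  shows "graph_tree (ext_vertices A L w) (ext_edge A L w)"
  unfolding ext_vertices_def
proof (rule graph_tree_double_star)
  show "a' \<in> Ex_l A L w" and "b' \<in> Ex_r A L w"
    using assms(1,2) by (simp_all add: left_pivot_def right_pivot_def)
  show "\<exists>a b. u = Inl a \<and> v = Inr b" if "ext_edge A L w u v" for u v
    using that by (auto simp: ext_edge_iff)
  show "ext_edge A L w (Inl a) (Inr b) \<longleftrightarrow> a = a' \<or> b = b'"
    if "a \<in> Ex_l A L w" and "b \<in> Ex_r A L w" for a b
    using that Ex_lr_if_pivots[OF assms] by simp
qed

lemma multiplicity_nonpos_if_graph_tree:
  assumes "graph_tree (ext_vertices A L w) (ext_edge A L w)"
  shows "multiplicity w \<le> 0"
proof -
  let ?V = "ext_vertices A L w"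
  have "{(u, v). u \<in> ?V \<and> v \<in> ?V \<and> ext_edge A L w u v} = (\<lambda>(a, b). (Inl a, Inr b)) ` Ex_lr A L w"
    using Ex_lr_subset[of w] by (auto simp: ext_vertices_def ext_edge_iff)
  moreover have "card ((\<lambda>(a, b). (Inl a, Inr b)) ` Ex_lr A L w :: ('a + 'a) rel) = card (Ex_lr A L w)"
    by (rule card_image) (auto simp: inj_on_def)
  moreover have "card ?V = card (Ex_l A L w) + card (Ex_r A L w)"
    unfolding ext_vertices_def
    by (subst card_Un_disjoint) (auto simp: finite_Ex_l finite_Ex_r card_image)
  moreover have "finite ?V" by (simp add: ext_vertices_def finite_Ex_l finite_Ex_r)
  ultimately have "card (Ex_lr A L w) < card (Ex_l A L w) + card (Ex_r A L w)"
    using graph_tree_card_edges[OF _ assms] by (fastforce simp: ext_edge_iff)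
  then show ?thesis unfolding multiplicity_def by linarith
qed

lemma pivots_if_regular_bispecial:
  "regular_bispecial A L w \<Longrightarrow> (\<exists>a'. left_pivot w a') \<and> (\<exists>b'. right_pivot w b')"
  unfolding regular_bispecial_def left_pivot_def right_pivot_def by auto

lemma pivots_if_not_left_special:
  assumes "w \<in> L" and "\<not> left_special A L w"
  shows "(\<exists>a'. left_pivot w a') \<and> (\<exists>b'. right_pivot w b')"
proof -
  have "card (Ex_l A L w) = 1"
    using assms Ex_l_nonempty finite_Ex_l unfolding left_special_def
    by (metis One_nat_def card_0_eq less_2_cases not_le)
  then obtain a' where a': "Ex_l A L w = {a'}" by (rule card_1_singletonE)
  obtain b' where "b' \<in> Ex_r A L w" using Ex_r_nonempty[OF assms(1)] by blast
  moreover have "\<not> left_special A L (w @ [b])" for b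
    using card_mono[OF finite_Ex_l Ex_l_snoc_subset, of w b] a' by (simp add: left_special_def)
  ultimately have "right_pivot w b'" by (simp add: right_pivot_def)
  moreover have "left_pivot w a'" using a' by (simp add: left_pivot_def)
  ultimately show ?thesis by blast
qed

lemma pivots_if_not_bispecial:
  assumes "w \<in> L" and "\<not> bispecial A L w"
  shows "(\<exists>a'. left_pivot w a') \<and> (\<exists>b'. right_pivot w b')"
proof (cases "left_special A L w")
  case False
  then show ?thesis by (rule pivots_if_not_left_special[OF assms(1)])
next
  case True
  with assms have "rev w \<in> rev ` L" and "\<not> left_special A (rev ` L) (rev w)"
    by (simp_all add: bispecial_def left_special_rev)
  then have "(\<exists>a'. mirror.left_pivot (rev w) a') \<and> (\<exists>b'. mirror.right_pivot (rev w) b')"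
    by (rule language.pivots_if_not_left_special[OF language_rev])
  then show ?thesis by (auto simp: mirror_left_pivot mirror_right_pivot)
qed

definition right_special_words :: "nat \<Rightarrow> 'a list set" where
  "right_special_words n = {w \<in> words_of_length n. right_special A L w}"

lemma card_right_special_words:
  "card (right_special_words n) = (\<Sum>w\<in>words_of_length n. of_bool (right_special A L w))"
  by (simp add: right_special_words_def finite_words_of_length Int_def)

lemma card_right_special_words_Suc:
  assumes "1 \<le> n"
  shows "card (right_special_words (Suc n))
    = (\<Sum>w\<in>words_of_length n. card {a \<in> Ex_l A L w. right_special A L (a # w)})"
  by (simp add: card_right_special_words sum_words_of_length_Suc[OF assms] finite_Ex_l Int_def)

lemma card_right_special_words_le: "1 \<le> n \<Longrightarrow> int (card (right_special_words n)) \<le> complexity_diff n"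
  unfolding card_right_special_words complexity_diff_eq of_nat_sum
  by (intro sum_mono) (auto simp: words_of_length_def right_special_def Suc_le_eq card_gt_0_iff
      finite_Ex_r Ex_r_nonempty)

lemma right_special_le_card_right_special_left_extensions:
  assumes "w \<in> L" and "multiplicity w = 0"
  shows "of_bool (right_special A L w) \<le> card {a \<in> Ex_l A L w. right_special A L (a # w)}"
proof (cases "right_special A L w")
  case True
  obtain a' where a': "a' \<in> Ex_l A L w" using Ex_l_nonempty[OF assms(1)] by blast
  have "{a \<in> Ex_l A L w. right_special A L (a # w)} \<noteq> {}"
  proof
    assume "{a \<in> Ex_l A L w. right_special A L (a # w)} = {}"
    with a' have "left_pivot w a'" and "card (Ex_r A L (a' # w)) \<le> 1"
      by (auto simp: left_pivot_def right_special_def)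
    then have "multiplicity w < 0"
      using multiplicity_le_left_pivot True unfolding right_special_def by fastforce
    with assms(2) show False by simp
  qed
  then show ?thesis using finite_Ex_l by (simp add: card_gt_0_iff Suc_le_eq)
qed simp

lemma card_right_special_words_le_Suc:
  assumes "1 \<le> n" and zero: "\<And>w. w \<in> words_of_length n \<Longrightarrow> multiplicity w = 0"
  shows "card (right_special_words n) \<le> card (right_special_words (Suc n))"
proof -
  have "card (right_special_words n) = (\<Sum>w\<in>words_of_length n. of_bool (right_special A L w))"
    by (rule card_right_special_words)
  also have "\<dots> \<le> (\<Sum>w\<in>words_of_length n. card {a \<in> Ex_l A L w. right_special A L (a # w)})"
    using zero by (intro sum_mono right_special_le_card_right_special_left_extensions)
      (auto simp: words_of_length_def)
  also have "\<dots> = card (right_special_words (Suc n))"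
    by (rule card_right_special_words_Suc[OF assms(1), symmetric])
  finally show ?thesis .
qed

lemma unique_right_special_left_extension_if_card_eq:
  assumes "1 \<le> n" and zero: "\<And>w. w \<in> words_of_length n \<Longrightarrow> multiplicity w = 0"
    and "card (right_special_words (Suc n)) = card (right_special_words n)"
    and "w \<in> right_special_words n"
  shows "\<exists>!a. a \<in> Ex_l A L w \<and> right_special A L (a # w)"
proof -
  have "(\<Sum>u\<in>words_of_length n. of_bool (right_special A L u))
      = (\<Sum>u\<in>words_of_length n. card {a \<in> Ex_l A L u. right_special A L (a # u)})"
    using assms(3) card_right_special_words_Suc[OF assms(1)] card_right_special_words[of n] by simp
  moreover have "of_bool (right_special A L u) \<le> card {a \<in> Ex_l A L u. right_special A L (a # u)}"
    if "u \<in> words_of_length n" for u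
    using zero that by (intro right_special_le_card_right_special_left_extensions)
      (auto simp: words_of_length_def)
  moreover have "w \<in> words_of_length n" and "right_special A L w"
    using assms(4) by (simp_all add: right_special_words_def)
  ultimately have "card {a \<in> Ex_l A L w. right_special A L (a # w)} = 1"
    using sum_mono_inv[OF _ _ _ finite_words_of_length] by fastforce
  then obtain a where "{a \<in> Ex_l A L w. right_special A L (a # w)} = {a}"
    by (rule card_1_singletonE)
  then show ?thesis by (intro ex1I[of _ a]) (auto simp: set_eq_iff)
qed

lemma unique_right_special_left_extension:
  assumes "for_long_words (\<lambda>w. multiplicity w = 0)"
  shows "for_long_words (\<lambda>w. right_special A L w \<longrightarrow> (\<exists>!a. a \<in> Ex_l A L w \<and> right_special A L (a # w)))"
proof -
  obtain N where "1 \<le> N" and zero: "\<And>w. w \<in> L \<Longrightarrow> N \<le> length w \<Longrightarrow> multiplicity w = 0"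
    using assms by (rule for_long_wordsE[where k = 1]) blast
  then have zero_at: "multiplicity w = 0" if "N \<le> n" and "w \<in> words_of_length n" for n w
    using that by (auto simp: words_of_length_def)
  have diff_const: "complexity_diff n = complexity_diff N" if "N \<le> n" for n
    using that
  proof (induction rule: dec_induct)
    case (step n)
    then show ?case
      using complexity_diff_Suc[of n] zero_at[OF step.hyps(1)] \<open>1 \<le> N\<close> by simp
  qed simp
  have "card (right_special_words n) \<le> card (right_special_words (Suc n))" if "N \<le> n" for n
    using \<open>1 \<le> N\<close> that by (intro card_right_special_words_le_Suc zero_at[OF that]) simp
  moreover have "card (right_special_words n) \<le> nat (complexity_diff N)" if "N \<le> n" for n
    using card_right_special_words_le[of n] diff_const[OF that] that \<open>1 \<le> N\<close> by simp
  ultimately obtain M where "N \<le> M"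
    and const: "\<And>n. M \<le> n \<Longrightarrow> card (right_special_words n) = card (right_special_words M)"
    using nat_mono_bounded_eventually_constant[of N "\<lambda>n. card (right_special_words n)"] by blast
  show ?thesis
    unfolding for_long_words_def
  proof (intro exI[of _ M] ballI impI)
    fix w assume "w \<in> L" and "M \<le> length w" and "right_special A L w"
    moreover have "card (right_special_words (Suc (length w))) = card (right_special_words (length w))"
      using const[of "length w"] const[of "Suc (length w)"] \<open>M \<le> length w\<close> by simp
    ultimately show "\<exists>!a. a \<in> Ex_l A L w \<and> right_special A L (a # w)"
      using \<open>1 \<le> N\<close> \<open>N \<le> M\<close>
      by (intro unique_right_special_left_extension_if_card_eq[of "length w"] zero_at)
        (auto simp: right_special_words_def words_of_length_def)
  qed
qed

lemma unique_left_special_right_extension: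
  assumes "for_long_words (\<lambda>w. multiplicity w = 0)"
  shows "for_long_words (\<lambda>w. left_special A L w \<longrightarrow> (\<exists>!b. b \<in> Ex_r A L w \<and> left_special A L (w @ [b])))"
proof -
  have "mirror.for_long_words (\<lambda>u. mirror.multiplicity u = 0)"
    using assms by (simp add: mirror_for_long_words mirror_multiplicity)
  then have "mirror.for_long_words (\<lambda>u. right_special A (rev ` L) u \<longrightarrow>
      (\<exists>!a. a \<in> Ex_l A (rev ` L) u \<and> right_special A (rev ` L) (a # u)))"
    by (rule language.unique_right_special_left_extension[OF language_rev])
  then show ?thesis
    by (simp add: mirror_for_long_words right_special_rev Ex_l_rev)
qed

lemma eventually_dendric_iff_for_long_words:
  "eventually_dendric A L \<longleftrightarrow> for_long_words (\<lambda>w. graph_tree (ext_vertices A L w) (ext_edge A L w))"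
  by (simp add: eventually_dendric_def for_long_words_def)

lemma RBC_iff_for_long_words:
  "RBC A L \<longleftrightarrow> for_long_words (\<lambda>w. bispecial A L w \<longrightarrow> regular_bispecial A L w)"
  unfolding RBC_def for_long_words_def by blast

lemma RBC_imp_eventually_dendric:
  assumes "RBC A L"
  shows "eventually_dendric A L"
proof -
  have pivots: "for_long_words (\<lambda>w. (\<exists>a'. left_pivot w a') \<and> (\<exists>b'. right_pivot w b'))"
    using assms unfolding RBC_iff_for_long_words
    by (rule for_long_words_mono) (metis pivots_if_regular_bispecial pivots_if_not_bispecial)
  then have "for_long_words (\<lambda>w. multiplicity w \<le> 0)"
    by (rule for_long_words_mono) (metis multiplicity_nonpos_if_left_pivot)
  then have "for_long_words (\<lambda>w. multiplicity w = 0)"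
    by (rule multiplicity_eventually_zero)
  with pivots show ?thesis
    unfolding eventually_dendric_iff_for_long_words
    by (rule for_long_words_mono[OF for_long_words_conj]) (metis graph_tree_if_pivots)
qed

lemma eventually_dendric_imp_RBC:
  assumes "eventually_dendric A L"
  shows "RBC A L"
proof -
  have "for_long_words (\<lambda>w. multiplicity w \<le> 0)"
    using assms unfolding eventually_dendric_iff_for_long_words
    by (rule for_long_words_mono) (rule multiplicity_nonpos_if_graph_tree)
  then have "for_long_words (\<lambda>w. multiplicity w = 0)"
    by (rule multiplicity_eventually_zero)
  then have "for_long_words (\<lambda>w. (right_special A L w \<longrightarrow> (\<exists>!a. a \<in> Ex_l A L w \<and> right_special A L (a # w)))
      \<and> (left_special A L w \<longrightarrow> (\<exists>!b. b \<in> Ex_r A L w \<and> left_special A L (w @ [b]))))"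
    by (intro for_long_words_conj unique_right_special_left_extension unique_left_special_right_extension)
  then show ?thesis
    unfolding RBC_iff_for_long_words
    by (rule for_long_words_mono) (simp add: regular_bispecial_def bispecial_def)
qed

end

theorem mainTheorem4:
  fixes A :: "'a set" and L :: "'a list set"
  assumes "is_language A L" and "recurrent L"
  shows "eventually_dendric A L \<longleftrightarrow> RBC A L"
proof -
  interpret language A L by (rule language.intro) (rule assms(1))
  show ?thesis using RBC_imp_eventually_dendric eventually_dendric_imp_RBC by blast
qed

end
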